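(* Let $d\ge1$ and $n>1$ be integers with prime factorization $n=p_1^{\alpha_1}\cdots p_s^{\alpha_s}$, and put $t=\prod_{i=1}^s p_i^{\alpha_i+\lfloor\log_{p_i} d\rfloor}$. Then for every (closed) simplex $\Delta\subset\mathbb{R}^d$ of any dimension whose vertices lie in $\mathbb{Z}^d$, the number of points of $\mathbb{Z}^d$ in $t\Delta$ is congruent to $1$ modulo $n$.
   Context: For a set $X\subseteq\mathbb{R}^d$ and $t>0$, $tX=\{tx : x\in X\}$ denotes the image of $X$ under the homothety with center at the origin and ratio $t$. $\lfloor x\rfloor$ denotes the integer part of $x$. *)

theory Defs
  imports "HOL-Analysis.Analysis" "HOL-Computational_Algebra.Primes"
begin

definition lattice_points :: "(real ^ 'd) set" where
  "lattice_points = {x. \<forall>i. x $ i \<in> \<int>}"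

definition scale_t :: "nat \<Rightarrow> nat \<Rightarrow> nat" where
  "scale_t d n = (\<Prod>p\<in>prime_factors n.
      p ^ (multiplicity p n + nat \<lfloor>log (real p) (real d)\<rfloor>))"

end

theory Submission
  imports Defs "HOL-Library.Multiset"
begin

(* Let C be the vertex set of a lattice simplex in R^d, K = card C <= d + 1, and t = scale_t d n.
   Every point x of t * conv C has unique barycentric coordinates mu_x : C -> [0,oo) with
   sum mu_x = t.  Split each mu_x(v) into its integer and fractional part.  The fractional parts
   form the "pattern" of x; their sum, the "weight" r of the pattern, is an integer with r < K.
   Lattice points with a fixed pattern f correspond bijectively to multisets of size t - r over C
   (recording the integer parts), so there are binomial(K + (t - r) - 1, t - r) of them.
   Since n divides binomial(t, i) for 1 <= i <= d (a Kummer-type estimate on p-adic valuations),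
   Vandermonde's identity shows that this number is congruent mod n to binomial(K - 1 - r, K - 1),
   i.e. to 1 if r = 0 and to 0 otherwise.  Finally, exactly one pattern has weight 0: the zero
   pattern, attained at the scaled vertices. *)

lemma less_prime_power_floor_log:
  fixes p d :: nat
  assumes "prime p" and "d \<ge> 1"
  shows "d < p ^ (nat \<lfloor>log p d\<rfloor> + 1)"
proof -
  have p_gt_1: "real p > 1" using assms prime_gt_1_nat by auto
  have "log p d \<ge> 0" using p_gt_1 assms by simp
  then have "log p d < real (nat \<lfloor>log p d\<rfloor> + 1)" by linarith
  then have "real d < real p powr real (nat \<lfloor>log p d\<rfloor> + 1)"
    using log_less_iff[OF p_gt_1] assms by simp
  also have "\<dots> = real (p ^ (nat \<lfloor>log p d\<rfloor> + 1))"
    using p_gt_1 by (subst powr_realpow) auto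
  finally show ?thesis by linarith
qed

lemma multiplicity_le_floor_log:
  fixes p i d :: nat
  assumes "prime p" and "1 \<le> i" and "i \<le> d"
  shows "multiplicity p i \<le> nat \<lfloor>log p d\<rfloor>"
proof (rule ccontr)
  let ?e = "nat \<lfloor>log p d\<rfloor>"
  assume "\<not> multiplicity p i \<le> ?e"
  then have "p ^ (?e + 1) dvd i" by (intro multiplicity_dvd') simp
  then have "p ^ (?e + 1) \<le> i" using assms by (simp add: dvd_imp_le)
  with less_prime_power_floor_log[of p d] assms show False by simp
qed

lemma prime_power_dvd_scale_t:
  assumes "p \<in> prime_factors n"
  shows "p ^ (multiplicity p n + nat \<lfloor>log p d\<rfloor>) dvd scale_t d n"
  unfolding scale_t_def by (rule dvd_prodI) (use assms in auto)

(* From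
   i * binomial(t, i) = t * binomial(t - 1, i - 1) one gets
   v_p(binomial(t, i)) >= v_p(t) - v_p(i) >= alpha_p for every prime p dividing n. *)
lemma scale_t_dvd_binomial:
  assumes "n > 0" and "1 \<le> i" and "i \<le> d"
  shows "n dvd (scale_t d n choose i)"
proof (cases "scale_t d n choose i = 0")
  case False
  define t where "t = scale_t d n"
  show ?thesis unfolding t_def[symmetric]
  proof (rule multiplicity_le_imp_dvd)
    show "n \<noteq> 0" using assms by simp
    fix p :: nat assume p: "prime p"
    show "multiplicity p n \<le> multiplicity p (t choose i)"
    proof (cases "p dvd n")
      case True
      let ?e = "nat \<lfloor>log p d\<rfloor>"
      have "p ^ (multiplicity p n + ?e) dvd t"
        unfolding t_def using True p assms by (intro prime_power_dvd_scale_t) (auto simp: in_prime_factors_iff)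
      moreover have "i * (t choose i) = t * (t - 1 choose (i - 1))"
        using times_binomial_minus1_eq[of i t] assms by simp
      ultimately have "p ^ (multiplicity p n + ?e) dvd i * (t choose i)"
        by (metis dvd_mult2)
      then have "multiplicity p n + ?e \<le> multiplicity p (i * (t choose i))"
        using False assms p prime_gt_1_nat[OF p] unfolding t_def
        by (intro multiplicity_geI) auto
      also have "\<dots> = multiplicity p i + multiplicity p (t choose i)"
        using False assms p unfolding t_def by (simp add: prime_elem_multiplicity_mult_distrib)
      finally show ?thesis using multiplicity_le_floor_log[OF p assms(2,3)] by simp
    qed (simp add: not_dvd_imp_multiplicity_0)
  qed
qed (metis dvd_0_right)

(* By Vandermonde, adding t to the upper index of binomial(j, k) does not change it mod n. *)
lemma binomial_add_scale_t_mod: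
  assumes "n > 0" and "k \<le> d"
  shows "((scale_t d n + j) choose k) mod n = (j choose k) mod n"
proof -
  define t where "t = scale_t d n"
  have "(t + j) choose k = (\<Sum>i\<le>k. (t choose i) * (j choose (k - i)))"
    by (simp add: vandermonde)
  also have "{..k} = insert 0 {1..k}" by auto
  finally have split: "(t + j) choose k = (j choose k) + (\<Sum>i\<in>{1..k}. (t choose i) * (j choose (k - i)))"
    by simp
  have "n dvd (\<Sum>i\<in>{1..k}. (t choose i) * (j choose (k - i)))"
    using assms scale_t_dvd_binomial[of n _ d] unfolding t_def by (intro dvd_sum) auto
  then show ?thesis unfolding t_def[symmetric] split by auto
qed

lemma binomial_scale_t_mod:
  fixes n d K r :: nat
  assumes "n > 1" and "r < K" and "K \<le> d + 1" and "r \<le> scale_t d n"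
  shows "((K + (scale_t d n - r) - 1) choose (scale_t d n - r)) mod n = (if r = 0 then 1 else 0)"
proof -
  define t where "t = scale_t d n"
  have "(K + (t - r) - 1) choose (t - r) = (t + (K - 1 - r)) choose (K - 1)"
    using binomial_symmetric[of "t - r" "t + (K - 1 - r)"] assms unfolding t_def[symmetric]
    by (simp add: algebra_simps)
  also have "\<dots> mod n = ((K - 1 - r) choose (K - 1)) mod n"
    unfolding t_def using assms by (intro binomial_add_scale_t_mod) auto
  also have "\<dots> = (if r = 0 then 1 else 0)"
    using assms by (auto simp: binomial_eq_0)
  finally show ?thesis unfolding t_def .
qed

lemma lattice_points_add:
  "x \<in> lattice_points \<Longrightarrow> y \<in> lattice_points \<Longrightarrow> x + y \<in> lattice_points"
  by (auto simp: lattice_points_def)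

lemma lattice_points_scaleR:
  "c \<in> \<int> \<Longrightarrow> x \<in> lattice_points \<Longrightarrow> c *\<^sub>R x \<in> lattice_points"
  by (auto simp: lattice_points_def)

lemma lattice_points_integer_combination:
  assumes "A \<subseteq> lattice_points" and "\<And>v. v \<in> A \<Longrightarrow> c v \<in> \<int>"
  shows "(\<Sum>v\<in>A. c v *\<^sub>R v) \<in> lattice_points"
proof (cases "finite A")
  case True
  then show ?thesis using assms
    by (induction A rule: finite_induct)
       (auto simp: lattice_points_add lattice_points_scaleR, simp add: lattice_points_def)
qed (simp add: lattice_points_def)

lemma finite_bounded_lattice_points:
  fixes S :: "(real ^ 'd) set"
  assumes "bounded S"
  shows "finite (S \<inter> lattice_points)"
proof -
  obtain B where B: "\<And>x. x \<in> S \<Longrightarrow> norm x \<le> B" using assms bounded_iff by blast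
  define c where "c = \<lceil>B\<rceil>"
  let ?box = "PiE (UNIV :: 'd set) (\<lambda>_. {-c..c})"
  have "S \<inter> lattice_points \<subseteq> (\<lambda>g. \<chi> i. real_of_int (g i)) ` ?box"
  proof
    fix x assume x: "x \<in> S \<inter> lattice_points"
    define g where "g i = \<lfloor>x $ i\<rfloor>" for i
    have x_eq: "x $ i = real_of_int (g i)" for i
      using x by (auto simp: lattice_points_def g_def)
    have "\<bar>x $ i\<bar> \<le> B" for i using component_le_norm_cart[of x i] B x by force
    then have bound: "of_int \<bar>g i\<bar> \<le> B" for i by (simp add: x_eq)
    have g_bound: "\<bar>g i\<bar> \<le> c" for i
      using bound[of i] unfolding c_def le_ceiling_iff by linarith
    have "g i \<in> {-c..c}" for i
      using g_bound[of i] by (auto simp: abs_le_iff)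
    then have "g \<in> ?box" by auto
    moreover have "x = (\<chi> i. real_of_int (g i))" using x_eq by (simp add: vec_eq_iff)
    ultimately show "x \<in> (\<lambda>g. \<chi> i. real_of_int (g i)) ` ?box" by blast
  qed
  moreover have "finite ?box" by (rule finite_PiE) auto
  ultimately show ?thesis using finite_subset by blast
qed

lemma affine_independent_coeffs_unique:
  fixes C :: "'a::real_vector set"
  assumes "finite C" and "\<not> affine_dependent C"
    and "sum \<mu> C = sum \<nu> C" and "(\<Sum>v\<in>C. \<mu> v *\<^sub>R v) = (\<Sum>v\<in>C. \<nu> v *\<^sub>R v)"
    and "v \<in> C"
  shows "\<mu> v = \<nu> v"
proof (rule ccontr)
  assume "\<mu> v \<noteq> \<nu> v"
  moreover have "sum (\<lambda>w. \<mu> w - \<nu> w) C = 0" using assms by (simp add: sum_subtractf)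
  moreover have "(\<Sum>w\<in>C. (\<mu> w - \<nu> w) *\<^sub>R w) = 0"
    using assms by (simp add: scaleR_diff_left sum_subtractf)
  ultimately have "affine_dependent C"
    using assms(5) unfolding affine_dependent_explicit_finite[OF assms(1)]
    by (intro exI[of _ "\<lambda>w. \<mu> w - \<nu> w"]) auto
  with assms show False by blast
qed

lemma scaled_convex_hull_finite:
  fixes C :: "'a::real_vector set"
  assumes "finite C" and "T > 0"
  shows "x \<in> (\<lambda>y. T *\<^sub>R y) ` (convex hull C) \<longleftrightarrow>
    (\<exists>\<mu>. (\<forall>v\<in>C. 0 \<le> \<mu> v) \<and> sum \<mu> C = T \<and> (\<Sum>v\<in>C. \<mu> v *\<^sub>R v) = x)"
proof
  assume "x \<in> (\<lambda>y. T *\<^sub>R y) ` (convex hull C)"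
  then obtain u where "\<forall>v\<in>C. 0 \<le> u v" "sum u C = 1" "x = T *\<^sub>R (\<Sum>v\<in>C. u v *\<^sub>R v)"
    using convex_hull_finite[OF assms(1)] by auto
  then show "\<exists>\<mu>. (\<forall>v\<in>C. 0 \<le> \<mu> v) \<and> sum \<mu> C = T \<and> (\<Sum>v\<in>C. \<mu> v *\<^sub>R v) = x"
    using assms by (intro exI[of _ "\<lambda>v. T * u v"])
      (auto simp: sum_distrib_left[symmetric] scaleR_sum_right)
next
  assume "\<exists>\<mu>. (\<forall>v\<in>C. 0 \<le> \<mu> v) \<and> sum \<mu> C = T \<and> (\<Sum>v\<in>C. \<mu> v *\<^sub>R v) = x"
  then obtain \<mu> where \<mu>: "\<forall>v\<in>C. 0 \<le> \<mu> v" "sum \<mu> C = T" "(\<Sum>v\<in>C. \<mu> v *\<^sub>R v) = x"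
    by blast
  have "(1 / T) *\<^sub>R x \<in> convex hull C"
    unfolding convex_hull_finite[OF assms(1)] using \<mu> assms
    by (intro CollectI exI[of _ "\<lambda>v. \<mu> v / T"])
      (auto simp: sum_divide_distrib[symmetric] scaleR_sum_right)
  moreover have "x = T *\<^sub>R ((1 / T) *\<^sub>R x)" using assms by simp
  ultimately show "x \<in> (\<lambda>y. T *\<^sub>R y) ` (convex hull C)" by blast
qed

lemma size_eq_sum_count:
  assumes "finite A" and "set_mset M \<subseteq> A"
  shows "size M = (\<Sum>v\<in>A. count M v)"
proof -
  have "size M = (\<Sum>v\<in>set_mset M. count M v)" by (simp add: size_multiset_overloaded_eq)
  also have "\<dots> = (\<Sum>v\<in>A. count M v)"
    using assms by (intro sum.mono_neutral_left) (auto simp: not_in_iff)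
  finally show ?thesis .
qed

lemma card_affine_independent_le:
  fixes C :: "'a::euclidean_space set"
  assumes "\<not> affine_dependent C"
  shows "card C \<le> DIM('a) + 1"
  using aff_dim_affine_independent[OF assms] aff_dim_le_DIM[of C] by linarith

lemma scale_t_pos: "scale_t d n > 0"
  unfolding scale_t_def by (rule prod_pos) (auto simp: in_prime_factors_iff prime_gt_0_nat)

locale lattice_simplex =
  fixes C :: "(real ^ 'd) set" and t :: nat
  assumes finite_C: "finite C" and C_nonempty: "C \<noteq> {}"
    and independent_C: "\<not> affine_dependent C" and C_lattice: "C \<subseteq> lattice_points"
    and t_pos: "t > 0"
begin

definition points :: "(real ^ 'd) set" where
  "points = (\<lambda>x. real t *\<^sub>R x) ` (convex hull C) \<inter> lattice_points"

definition is_coords :: "(real ^ 'd \<Rightarrow> real) \<Rightarrow> real ^ 'd \<Rightarrow> bool" where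
  "is_coords \<mu> x \<longleftrightarrow> (\<forall>v\<in>C. 0 \<le> \<mu> v) \<and> sum \<mu> C = real t \<and> (\<Sum>v\<in>C. \<mu> v *\<^sub>R v) = x"

definition coord :: "real ^ 'd \<Rightarrow> real ^ 'd \<Rightarrow> real" where
  "coord x = (SOME \<mu>. is_coords \<mu> x)"

definition pattern :: "real ^ 'd \<Rightarrow> real ^ 'd \<Rightarrow> real" where
  "pattern x v = (if v \<in> C then frac (coord x v) else 0)"

definition weight :: "(real ^ 'd \<Rightarrow> real) \<Rightarrow> nat" where
  "weight f = nat \<lfloor>sum f C\<rfloor>"

definition lift :: "(real ^ 'd \<Rightarrow> real) \<Rightarrow> (real ^ 'd) multiset \<Rightarrow> real ^ 'd" where
  "lift f M = (\<Sum>v\<in>C. (real (count M v) + f v) *\<^sub>R v)"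

lemma points_iff: "x \<in> points \<longleftrightarrow> x \<in> lattice_points \<and> (\<exists>\<mu>. is_coords \<mu> x)"
  unfolding points_def is_coords_def
  using scaled_convex_hull_finite[OF finite_C, of "real t" x] t_pos by auto

lemma coord_eq:
  assumes "is_coords \<mu> x" and "v \<in> C"
  shows "coord x v = \<mu> v"
proof -
  have "is_coords (coord x) x" unfolding coord_def using assms(1) by (rule someI[of "\<lambda>\<mu>. is_coords \<mu> x"])
  then have "sum (coord x) C = sum \<mu> C" and "(\<Sum>v\<in>C. coord x v *\<^sub>R v) = (\<Sum>v\<in>C. \<mu> v *\<^sub>R v)"
    using assms(1) by (auto simp: is_coords_def)
  then show ?thesis by (rule affine_independent_coeffs_unique[OF finite_C independent_C _ _ assms(2)])
qed

lemma coord_is_coords: "x \<in> points \<Longrightarrow> is_coords (coord x) x"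
  unfolding coord_def using points_iff by (metis someI_ex)

lemma finite_points: "finite points"
  unfolding points_def
  by (intro finite_bounded_lattice_points bounded_scaling finite_imp_bounded_convex_hull finite_C)

lemma pattern_nonneg: "0 \<le> pattern x v"
  and pattern_less_1: "pattern x v < 1"
  by (auto simp: pattern_def frac_lt_1)

lemma coord_split: "v \<in> C \<Longrightarrow> coord x v = of_int \<lfloor>coord x v\<rfloor> + pattern x v"
  by (simp add: pattern_def frac_def)

(* The pattern of a lattice point has integral weight, smaller than card C and at most t;
   integrality holds because the coordinates sum to t. *)
lemma weight_pattern:
  assumes "x \<in> points"
  shows "real (weight (pattern x)) = sum (pattern x) C"
    and "weight (pattern x) < card C" and "weight (pattern x) \<le> t"
proof -
  have coords: "is_coords (coord x) x" using assms by (rule coord_is_coords)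
  have "sum (pattern x) C = (\<Sum>v\<in>C. coord x v - of_int \<lfloor>coord x v\<rfloor>)"
  proof (rule sum.cong)
    fix v assume v: "v \<in> C"
    show "pattern x v = coord x v - of_int \<lfloor>coord x v\<rfloor>"
      using coord_split[OF v, of x] by linarith
  qed simp
  also have "\<dots> = real t - (\<Sum>v\<in>C. of_int \<lfloor>coord x v\<rfloor>)"
    using coords by (simp add: sum_subtractf is_coords_def)
  finally have "sum (pattern x) C \<in> \<int>" by auto
  then obtain z where z: "sum (pattern x) C = of_int z" by (auto elim: Ints_cases)
  moreover have "0 \<le> sum (pattern x) C" by (simp add: sum_nonneg pattern_nonneg)
  ultimately show weight: "real (weight (pattern x)) = sum (pattern x) C"
    by (simp add: weight_def)
  have "sum (pattern x) C < (\<Sum>v\<in>C. 1)"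
    by (rule sum_strict_mono[OF finite_C C_nonempty]) (simp add: pattern_less_1)
  then show "weight (pattern x) < card C" using weight by simp
  have "sum (pattern x) C \<le> sum (coord x) C"
  proof (rule sum_mono)
    fix v assume v: "v \<in> C"
    then have "0 \<le> \<lfloor>coord x v\<rfloor>" using coords by (simp add: is_coords_def)
    then show "pattern x v \<le> coord x v" using coord_split[OF v, of x] by linarith
  qed
  then show "weight (pattern x) \<le> t" using weight coords by (simp add: is_coords_def)
qed

lemma weight_eq_0_iff:
  assumes "x \<in> points"
  shows "weight (pattern x) = 0 \<longleftrightarrow> pattern x = (\<lambda>_. 0)"
proof -
  have "weight (pattern x) = 0 \<longleftrightarrow> sum (pattern x) C = 0"
    by (simp flip: weight_pattern(1)[OF assms])
  also have "\<dots> \<longleftrightarrow> (\<forall>v\<in>C. pattern x v = 0)"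
    by (rule sum_nonneg_eq_0_iff[OF finite_C]) (simp add: pattern_nonneg)
  also have "\<dots> \<longleftrightarrow> pattern x = (\<lambda>_. 0)"
    by (auto simp: fun_eq_iff pattern_def)
  finally show ?thesis .
qed

lemma zero_pattern_attained: "(\<lambda>_. 0) \<in> pattern ` points"
proof -
  obtain v0 where v0: "v0 \<in> C" using C_nonempty by blast
  define \<mu> where "\<mu> v = (if v = v0 then real t else 0)" for v
  have "(\<Sum>v\<in>C. \<mu> v *\<^sub>R v) = (\<Sum>v\<in>C. if v = v0 then real t *\<^sub>R v else 0)"
    by (rule sum.cong) (auto simp: \<mu>_def)
  then have coords: "is_coords \<mu> (real t *\<^sub>R v0)"
    using v0 finite_C unfolding is_coords_def by (auto simp: \<mu>_def)
  moreover have "real t *\<^sub>R v0 \<in> lattice_points"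
    using v0 C_lattice by (intro lattice_points_scaleR) auto
  ultimately have "real t *\<^sub>R v0 \<in> points" using points_iff by blast
  moreover have "pattern (real t *\<^sub>R v0) = (\<lambda>_. 0)"
    by (auto simp: fun_eq_iff pattern_def coord_eq[OF coords] \<mu>_def)
  ultimately show ?thesis by force
qed

lemma lift_coords:
  assumes "x0 \<in> points" and "M \<in> multisets_of_size C (t - weight (pattern x0))"
  shows "is_coords (\<lambda>v. real (count M v) + pattern x0 v) (lift (pattern x0) M)"
proof -
  have "(\<Sum>v\<in>C. real (count M v)) = real (t - weight (pattern x0))"
    using assms(2) size_eq_sum_count[OF finite_C, of M]
    by (simp add: multisets_of_size_def flip: of_nat_sum)
  then show ?thesis
    using weight_pattern[OF assms(1)]
    by (auto simp: is_coords_def lift_def sum.distrib pattern_nonneg add_nonneg_nonneg)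
qed

(* Lifting preserves the pattern and lands on a lattice point, since it differs from the
   lattice point x0 by an integer combination of vertices. *)
lemma lift_in_fiber:
  assumes "x0 \<in> points" and "M \<in> multisets_of_size C (t - weight (pattern x0))"
  shows "lift (pattern x0) M \<in> points" and "pattern (lift (pattern x0) M) = pattern x0"
proof -
  let ?x = "lift (pattern x0) M"
  have coords: "is_coords (\<lambda>v. real (count M v) + pattern x0 v) ?x"
    by (rule lift_coords[OF assms])
  have "?x - x0 = (\<Sum>v\<in>C. (real (count M v) + pattern x0 v - coord x0 v) *\<^sub>R v)"
    using coord_is_coords[OF assms(1)] unfolding lift_def is_coords_def
    by (simp add: scaleR_diff_left sum_subtractf)
  also have "\<dots> \<in> lattice_points"
  proof (rule lattice_points_integer_combination[OF C_lattice])
    fix v assume v: "v \<in> C"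
    have "real (count M v) + pattern x0 v - coord x0 v
        = of_nat (count M v) - of_int \<lfloor>coord x0 v\<rfloor>"
      using coord_split[OF v, of x0] by linarith
    then show "real (count M v) + pattern x0 v - coord x0 v \<in> \<int>"
      by (simp only: Ints_diff Ints_of_int Ints_of_nat)
  qed
  finally have "x0 + (?x - x0) \<in> lattice_points"
    using assms(1) points_iff lattice_points_add by blast
  then show "?x \<in> points" using coords points_iff by auto
  have frac_shift: "frac (real k + y) = y" if "0 \<le> y" "y < 1" for k :: nat and y :: real
    using that by (metis frac_add_of_int_left frac_eq of_int_of_nat_eq)
  show "pattern ?x = pattern x0"
  proof
    fix v show "pattern ?x v = pattern x0 v"
    proof (cases "v \<in> C")
      case True
      then have "pattern ?x v = frac (real (count M v) + pattern x0 v)"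
        by (simp only: pattern_def[of ?x] coord_eq[OF coords True] if_True)
      then show ?thesis using frac_shift pattern_nonneg pattern_less_1 by simp
    qed (simp add: pattern_def)
  qed
qed

lemma inj_on_lift:
  assumes "x0 \<in> points"
  shows "inj_on (lift (pattern x0)) (multisets_of_size C (t - weight (pattern x0)))"
proof (rule inj_onI)
  fix M M' assume M: "M \<in> multisets_of_size C (t - weight (pattern x0))"
    and M': "M' \<in> multisets_of_size C (t - weight (pattern x0))"
    and eq: "lift (pattern x0) M = lift (pattern x0) M'"
  have "count M v = count M' v" for v
  proof (cases "v \<in> C")
    case True
    have "real (count M v) + pattern x0 v = coord (lift (pattern x0) M) v"
      using coord_eq[OF lift_coords[OF assms M] True] by simp
    also have "\<dots> = real (count M' v) + pattern x0 v"
      unfolding eq using coord_eq[OF lift_coords[OF assms M'] True] .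
    finally show ?thesis by simp
  next
    case False
    then have "v \<notin># M" and "v \<notin># M'" using M M' by (auto simp: multisets_of_size_def)
    then show ?thesis by (simp add: not_in_iff)
  qed
  then show "M = M'" by (rule multiset_eqI)
qed

lemma lift_own_pattern:
  assumes "x \<in> points"
  shows "x \<in> lift (pattern x) ` multisets_of_size C (t - weight (pattern x))"
proof -
  define M where "M = (\<Sum>v\<in>C. replicate_mset (nat \<lfloor>coord x v\<rfloor>) v)"
  have coords: "is_coords (coord x) x" using assms by (rule coord_is_coords)
  have count_M: "count M v = (if v \<in> C then nat \<lfloor>coord x v\<rfloor> else 0)" for v
    unfolding M_def count_sum using finite_C by (simp add: count_replicate_mset)
  have set_M: "set_mset M \<subseteq> C"
  proof
    fix v assume "v \<in># M"
    then show "v \<in> C" using count_M[of v] by (auto split: if_splits simp: not_in_iff[symmetric])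
  qed
  have coord_count: "coord x v = real (count M v) + pattern x v" if v: "v \<in> C" for v
  proof -
    have "0 \<le> \<lfloor>coord x v\<rfloor>" using coords v by (simp add: is_coords_def)
    then have "real (count M v) = of_int \<lfloor>coord x v\<rfloor>" using v by (simp add: count_M)
    then show ?thesis using coord_split[OF v, of x] by linarith
  qed
  have "real (size M) = (\<Sum>v\<in>C. real (count M v))"
    using size_eq_sum_count[OF finite_C set_M] by simp
  also have "\<dots> = (\<Sum>v\<in>C. coord x v - pattern x v)"
    using coord_count by (intro sum.cong) auto
  also have "\<dots> = real (t - weight (pattern x))"
    using coords weight_pattern[OF assms] by (simp add: sum_subtractf is_coords_def)
  finally have M_in: "M \<in> multisets_of_size C (t - weight (pattern x))"
    using set_M by (simp add: multisets_of_size_def)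
  have "lift (pattern x) M = (\<Sum>v\<in>C. coord x v *\<^sub>R v)"
    unfolding lift_def using coord_count by (intro sum.cong) auto
  then have lift_M: "lift (pattern x) M = x"
    using coords by (simp add: is_coords_def)
  show ?thesis using lift_M M_in by (auto intro: image_eqI[of x "lift (pattern x)" M])
qed

lemma card_fiber:
  assumes "x0 \<in> points"
  shows "card {x \<in> points. pattern x = pattern x0}
    = (card C + (t - weight (pattern x0)) - 1) choose (t - weight (pattern x0))"
proof -
  let ?Ms = "multisets_of_size C (t - weight (pattern x0))"
  have "lift (pattern x0) ` ?Ms = {x \<in> points. pattern x = pattern x0}"
    using lift_in_fiber[OF assms] lift_own_pattern by force
  then have "card {x \<in> points. pattern x = pattern x0} = card ?Ms"
    using card_image[OF inj_on_lift[OF assms]] by simp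
  also have "\<dots> = (card C + (t - weight (pattern x0)) - 1) choose (t - weight (pattern x0))"
    by (rule card_multisets_of_size[OF finite_C])
  finally show ?thesis .
qed

lemma card_points:
  "card points = (\<Sum>f\<in>pattern ` points. (card C + (t - weight f) - 1) choose (t - weight f))"
proof -
  have "card points = (\<Sum>f\<in>pattern ` points. card {x \<in> points. pattern x = f})"
    using sum.image_gen[OF finite_points, of "\<lambda>_. 1::nat" pattern] by simp
  also have "\<dots> = (\<Sum>f\<in>pattern ` points. (card C + (t - weight f) - 1) choose (t - weight f))"
    using card_fiber by (intro sum.cong) auto
  finally show ?thesis .
qed

end

theorem mainTheorem4:
  fixes C :: "(real ^ 'd) set" and n :: nat
  assumes "n > 1"
    and "finite C" and "C \<noteq> {}" and "\<not> affine_dependent C"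
    and "C \<subseteq> lattice_points"
  shows "card ((\<lambda>x. real (scale_t CARD('d) n) *\<^sub>R x) ` (convex hull C) \<inter> lattice_points) mod n = 1"
proof -
  define t where "t = scale_t CARD('d) n"
  interpret lattice_simplex C t
    using assms scale_t_pos unfolding t_def by unfold_locales auto
  have card_C: "card C \<le> CARD('d) + 1"
    using card_affine_independent_le[OF assms(4)] by simp
  have term_mod: "((card C + (t - weight f) - 1) choose (t - weight f)) mod n
      = (if f = (\<lambda>_. 0) then 1 else 0)" if f: "f \<in> pattern ` points" for f
  proof -
    obtain x where x: "x \<in> points" "f = pattern x" using f by blast
    show ?thesis
      using binomial_scale_t_mod[OF assms(1) weight_pattern(2)[OF x(1)] card_C]
        weight_pattern(3)[OF x(1)] weight_eq_0_iff[OF x(1)]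
      unfolding x(2) t_def by simp
  qed
  have "card points mod n
      = (\<Sum>f\<in>pattern ` points. ((card C + (t - weight f) - 1) choose (t - weight f)) mod n) mod n"
    unfolding card_points by (rule mod_sum_eq[symmetric])
  also have "\<dots> = (\<Sum>f\<in>pattern ` points. if f = (\<lambda>_. 0) then 1 else 0) mod n"
    using term_mod by (intro arg_cong[where f = "\<lambda>s. s mod n"] sum.cong) auto
  also have "\<dots> = 1"
    using finite_points zero_pattern_attained assms(1) by simp
  finally show ?thesis unfolding points_def unfolding t_def .
qed

end
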